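(* Let $\mathcal A$ be a finite alphabet and $\Psi: \mathcal A^*\to \mathcal A^*$. Then $\Psi$ is a symmetry if and only if $\Psi$ is a morphism or an antimorphism whose restriction to $\mathcal A$ is a permutation of the letters of $\mathcal A$.
   Context: A symmetry on $\mathcal A^*$ is a map $\Psi:\mathcal A^*\to\mathcal A^*$ such that (1) $\Psi$ is a bijection and (2) for all $w,v\in\mathcal A^*$, the number of occurrences of $w$ in $v$ equals the number of occurrences of $\Psi(w)$ in $\Psi(v)$ (an occurrence of $w$ in $v=v_1\cdots v_m$ is an index $i$ such that $w$ is a prefix of $v_iv_{i+1}\cdots v_m$). $\Psi$ is a morphism if $\Psi(vw)=\Psi(v)\Psi(w)$ and an antimorphism if $\Psi(vw)=\Psi(w)\Psi(v)$ for all $v,w\in\mathcal A^*$. *)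

theory Defs
  imports Main
begin

text \<open>An occurrence of w in v = v_1...v_m is an
index i (1 \<le> i \<le> m) such that w is a prefix of v_i...v_m; with 0-based indexing
this is i < length v with w a prefix of drop i v, i.e. take (length w) (drop i v) = w.\<close>

definition occ :: "'a list \<Rightarrow> 'a list \<Rightarrow> nat" where
  "occ w v = card {i. i < length v \<and> take (length w) (drop i v) = w}"

definition symmetry :: "('a list \<Rightarrow> 'a list) \<Rightarrow> bool" where
  "symmetry \<Psi> \<longleftrightarrow> bij \<Psi> \<and> (\<forall>w v. occ w v = occ (\<Psi> w) (\<Psi> v))"

definition morphism :: "('a list \<Rightarrow> 'a list) \<Rightarrow> bool" where
  "morphism \<Psi> \<longleftrightarrow> (\<forall>v w. \<Psi> (v @ w) = \<Psi> v @ \<Psi> w)"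

definition antimorphism :: "('a list \<Rightarrow> 'a list) \<Rightarrow> bool" where
  "antimorphism \<Psi> \<longleftrightarrow> (\<forall>v w. \<Psi> (v @ w) = \<Psi> w @ \<Psi> v)"

definition restricts_to_letter_perm :: "('a list \<Rightarrow> 'a list) \<Rightarrow> bool" where
  "restricts_to_letter_perm \<Psi> \<longleftrightarrow> (\<exists>\<sigma>. bij \<sigma> \<and> (\<forall>a. \<Psi> [a] = [\<sigma> a]))"

end

theory Submission
  imports Defs "HOL-Library.Sublist" "HOL-Library.Multiset"
begin

text \<open>A symmetry preserves lengths (count the occurrences of the empty word), so on letters it
is a permutation \<open>\<sigma>\<close>, and \<open>map (inv \<sigma>) \<circ> \<Psi>\<close> is a symmetry \<open>\<Phi>\<close> fixing every letter. Such a \<open>\<Phi>\<close>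
preserves the multiset of letters, so \<open>\<Phi> [a, b]\<close> is \<open>[a, b]\<close> or \<open>[b, a]\<close>; since \<open>\<Phi> [a, b, c]\<close> has
both \<open>\<Phi> [a, b]\<close> and \<open>\<Phi> [b, c]\<close> as factors, all pairs are treated alike. Composing with \<open>rev\<close> if
necessary, \<open>\<Phi>\<close> fixes all words of length at most 2, hence all words by induction: a word of length
\<open>n + 1 \<ge> 3\<close> is determined by how often each word of length \<open>n\<close> and \<open>n - 1\<close> occurs in it.\<close>

section \<open>Counting occurrences\<close>

lemma occ_Nil [simp]: "occ w [] = 0"
  by (simp add: occ_def)

lemma occ_Cons: "occ w (c # v) = (if take (length w) (c # v) = w then 1 else 0) + occ w v"
proof -
  let ?S = "{i. i < length v \<and> take (length w) (drop i v) = w}"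
  let ?Z = "if take (length w) (c # v) = w then {0} else {}"
  have "{i. i < length (c # v) \<and> take (length w) (drop i (c # v)) = w} = ?Z \<union> Suc ` ?S"
    by (auto simp: image_iff less_Suc_eq_0_disj)
  moreover have "card (?Z \<union> Suc ` ?S) = card ?Z + card ?S"
    by (subst card_Un_disjoint) (auto simp: card_image)
  ultimately show ?thesis
    by (simp add: occ_def card_image)
qed

lemma occ_Cons_prefix: "occ w (c # v) = (if prefix w (c # v) then 1 else 0) + occ w v"
  by (simp add: occ_Cons prefix_def) (metis append_eq_conv_conj)

lemma occ_Nil_left: "occ [] v = length v"
  by (induct v) (auto simp: occ_Cons)

lemma occ_singleton: "occ [c] v = count (mset v) c"
  by (induct v) (auto simp: occ_Cons)

lemma occ_pos_iff_sublist: "w \<noteq> [] \<Longrightarrow> 0 < occ w v \<longleftrightarrow> sublist w v"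
  by (induct v) (auto simp: occ_Cons_prefix sublist_Cons_right)

lemma occ_snoc: "occ w (v @ [c]) = occ w v + (if suffix w (v @ [c]) then 1 else 0)"
proof (induct v)
  case Nil
  then show ?case
    by (cases w) (auto simp: occ_Cons_prefix suffix_Cons)
next
  case (Cons d v)
  have occ_step:
    "occ w ((d # v) @ [c]) = (if prefix w (d # v @ [c]) then 1 else 0) + occ w (v @ [c])"
    by (simp only: append_Cons occ_Cons_prefix)
  have "prefix w ((d # v) @ [c]) \<longleftrightarrow> prefix w (d # v) \<or> w = d # v @ [c]"
    using prefix_snoc[of w "d # v" c] by auto
  moreover have "suffix w (d # v @ [c]) \<longleftrightarrow> suffix w (v @ [c]) \<or> w = d # v @ [c]"
    by (auto simp: suffix_Cons)
  moreover have "w = d # v @ [c] \<Longrightarrow> \<not> prefix w (d # v) \<and> \<not> suffix w (v @ [c])"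
    by (auto dest: prefix_length_le suffix_length_le)
  ultimately show ?case
    using Cons occ_step occ_Cons_prefix[of w d v] by (auto split: if_splits)
qed

lemma occ_rev: "occ (rev w) (rev v) = occ w v"
  by (induct v) (auto simp: occ_snoc occ_Cons_prefix suffix_to_prefix)

lemma occ_map: "inj f \<Longrightarrow> occ (map f w) (map f v) = occ w v"
  unfolding occ_def by (simp add: drop_map take_map inj_map_eq_map)

lemma occ_longer: "length v < length w \<Longrightarrow> occ w v = 0"
  by (induct v) (auto simp: occ_Cons_prefix dest: prefix_length_le)

lemma occ_length_Suc:
  assumes "length u = Suc (length w)" "w \<noteq> []"
  shows "occ w u = count (mset [take (length w) u, drop 1 u]) w"
proof -
  obtain c d r where u: "u = c # d # r"
    using assms by (cases u; cases "tl u") auto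
  have "occ w r = 0"
    using assms u by (intro occ_longer) simp
  then show ?thesis
    using assms u by (simp add: occ_Cons)
qed

lemma occ_length_Suc_Suc:
  assumes "length u = Suc (Suc (length w))" "w \<noteq> []"
  shows "occ w u = count (mset [take (length w) u, take (length w) (drop 1 u), drop 2 u]) w"
proof -
  obtain c r where "u = c # r"
    using assms by (cases u) auto
  then show ?thesis
    using assms occ_length_Suc[of r w] by (simp add: occ_Cons)
qed

lemma mset_factors_length_Suc_eq:
  assumes "length x = Suc n" "length v = Suc n" "n \<noteq> 0"
    and "\<And>w. length w = n \<Longrightarrow> occ w x = occ w v"
  shows "mset [take n x, drop 1 x] = mset [take n v, drop 1 v]"
proof (rule multiset_eqI)
  fix w :: "'a list"
  show "count (mset [take n x, drop 1 x]) w = count (mset [take n v, drop 1 v]) w"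
  proof (cases "length w = n")
    case True
    then have "length x = Suc (length w)" "length v = Suc (length w)" "w \<noteq> []"
      using assms(1-3) by auto
    then show ?thesis
      using assms(4)[OF True] occ_length_Suc[of x w] occ_length_Suc[of v w] True by metis
  next
    case False
    then show ?thesis
      using assms(1,2) by auto
  qed
qed

lemma mset_factors_length_Suc_Suc_eq:
  assumes "length x = Suc (Suc m)" "length v = Suc (Suc m)" "m \<noteq> 0"
    and "\<And>w. length w = m \<Longrightarrow> occ w x = occ w v"
  shows "mset [take m x, take m (drop 1 x), drop 2 x]
    = mset [take m v, take m (drop 1 v), drop 2 v]"
proof (rule multiset_eqI)
  fix w :: "'a list"
  show "count (mset [take m x, take m (drop 1 x), drop 2 x]) w
      = count (mset [take m v, take m (drop 1 v), drop 2 v]) w"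
  proof (cases "length w = m")
    case True
    then have "length x = Suc (Suc (length w))" "length v = Suc (Suc (length w))" "w \<noteq> []"
      using assms(1-3) by auto
    then show ?thesis
      using assms(4)[OF True] occ_length_Suc_Suc[of x w] occ_length_Suc_Suc[of v w] True by metis
  next
    case False
    then show ?thesis
      using assms(1,2) by auto
  qed
qed

section \<open>Words determined by the occurrences of their long factors\<close>

lemma eq_if_take_drop_eq:
  assumes "length x = Suc n" "length v = Suc n" "n \<noteq> 0"
    and "take n x = take n v" "drop 1 x = drop 1 v"
  shows "x = v"
proof -
  have "take 1 x = take 1 v"
    using assms by (metis One_nat_def Suc_leI neq0_conv take_take min.absorb1)
  then show ?thesis
    using assms(5) by (metis append_take_drop_id)
qed

lemma swapped_factors_eq:
  assumes lx: "length x = Suc (Suc m)" and lv: "length v = Suc (Suc m)" and "m \<noteq> 0"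
    and pre: "take (Suc m) x = drop 1 v" and suf: "drop 1 x = take (Suc m) v"
    and occ_eq: "\<And>w. length w = m \<Longrightarrow> occ w x = occ w v"
  shows "take (Suc m) v = drop 1 v"
proof -
  define w where "w = take m v"
  define B where "B = take m (drop 1 v)"
  have x_factors: "take m x = B" "take m (drop 1 x) = w" "drop 2 x = B"
    using pre suf lx lv unfolding w_def B_def
    by (metis min.absorb1 le_SucI order_refl take_take,
        simp add: min_def, metis drop_drop drop_take one_add_one diff_Suc_1)
  have v_factor: "drop 2 v = w"
    using pre suf lx lv unfolding w_def
    by (metis drop_drop drop_take one_add_one diff_Suc_1 min.absorb1 le_SucI order_refl take_take)
  text \<open>Counting the occurrences of \<open>w\<close> among the three factors of length \<open>m\<close> forces \<open>B = w\<close>.\<close>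
  have "mset [B, w, B] = mset [w, B, w]"
    using mset_factors_length_Suc_Suc_eq[OF assms(1-3) occ_eq] x_factors v_factor
    unfolding w_def B_def by simp
  then have "count (mset [B, w, B]) w = count (mset [w, B, w]) w"
    by (rule arg_cong)
  then have "B = w"
    by (auto split: if_splits)
  have "take (Suc m) v = take 1 v @ B"
    unfolding B_def by (metis add.commute plus_1_eq_Suc take_add)
  also have "take 1 v = take 1 (drop 1 v)"
    using \<open>B = w\<close> \<open>m \<noteq> 0\<close> unfolding B_def w_def
    by (metis One_nat_def Suc_leI neq0_conv take_take min.absorb1)
  also have "take 1 (drop 1 v) @ B = drop 1 v"
    using \<open>B = w\<close> v_factor by (metis append_take_drop_id drop_drop one_add_one)
  finally show ?thesis .
qed

lemma eq_if_factor_occ_eq: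
  assumes "2 \<le> n" and lx: "length x = Suc n" and lv: "length v = Suc n"
    and occ_n: "\<And>w. length w = n \<Longrightarrow> occ w x = occ w v"
    and occ_pred: "\<And>w. length w = n - 1 \<Longrightarrow> occ w x = occ w v"
  shows "x = v"
proof -
  obtain m where n: "n = Suc m" "m \<noteq> 0"
    using assms(1) by (cases n) auto
  have "mset [take n x, drop 1 x] = mset [take n v, drop 1 v]"
    using mset_factors_length_Suc_eq[OF lx lv _ occ_n] n by simp
  then consider "take n x = take n v" "drop 1 x = drop 1 v"
    | "take n x = drop 1 v" "drop 1 x = take n v"
    by (auto simp: add_eq_conv_ex)
  then show ?thesis
  proof cases
    case 1
    then show ?thesis
      using eq_if_take_drop_eq[OF lx lv] n by simp
  next
    case 2
    moreover have "take n v = drop 1 v"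
      using swapped_factors_eq[of x m v] lx lv occ_pred 2 n by simp
    ultimately show ?thesis
      using eq_if_take_drop_eq[OF lx lv] n by simp
  qed
qed

section \<open>Symmetries\<close>

lemma symmetry_occ: "symmetry \<Psi> \<Longrightarrow> occ (\<Psi> w) (\<Psi> v) = occ w v"
  by (simp add: symmetry_def)

lemma symmetry_inj: "symmetry \<Psi> \<Longrightarrow> inj \<Psi>"
  by (simp add: symmetry_def bij_is_inj)

lemma symmetry_Nil: "symmetry \<Psi> \<Longrightarrow> \<Psi> [] = []"
  using occ_pos_iff_sublist[of "\<Psi> []" "\<Psi> []"] symmetry_occ[of \<Psi> "[]" "[]"] by auto

lemma symmetry_length: "symmetry \<Psi> \<Longrightarrow> length (\<Psi> v) = length v"
  using symmetry_occ[of \<Psi> "[]" v] by (simp add: symmetry_Nil occ_Nil_left)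

lemma symmetry_sublist:
  assumes "symmetry \<Psi>" "w \<noteq> []" "sublist w v"
  shows "sublist (\<Psi> w) (\<Psi> v)"
proof -
  have "\<Psi> w \<noteq> []"
    using assms(1,2) symmetry_length[of \<Psi> w] by auto
  moreover have "0 < occ (\<Psi> w) (\<Psi> v)"
    using assms occ_pos_iff_sublist[of w v] by (simp add: symmetry_occ)
  ultimately show ?thesis
    using occ_pos_iff_sublist by blast
qed

lemma symmetry_comp: "symmetry \<Phi> \<Longrightarrow> symmetry \<Psi> \<Longrightarrow> symmetry (\<Phi> \<circ> \<Psi>)"
  by (auto simp: symmetry_def intro: bij_comp)

lemma bij_map:
  assumes "bij f"
  shows "bij (map f)"
proof (rule bijI)
  show "inj (map f)"
    using assms by (simp add: bij_is_inj)
  have "map f (map (inv f) v) = v" for v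
    using assms by (simp add: bij_is_surj surj_f_inv_f map_idI)
  then show "surj (map f)"
    by (rule surjI)
qed

lemma symmetry_map: "bij f \<Longrightarrow> symmetry (map f)"
  by (simp add: symmetry_def bij_map occ_map bij_is_inj)

lemma symmetry_rev: "symmetry rev"
  by (simp add: symmetry_def occ_rev) (metis bijI' rev_rev_ident)

lemma letter_fixing_symmetry_mset:
  assumes "symmetry \<Phi>" "\<And>a. \<Phi> [a] = [a]"
  shows "mset (\<Phi> v) = mset v"
proof (rule multiset_eqI)
  fix c
  show "count (mset (\<Phi> v)) c = count (mset v) c"
    using symmetry_occ[OF assms(1), of "[c]" v] assms(2)[of c] by (simp add: occ_singleton)
qed

lemma letter_fixing_symmetry_pair:
  assumes "symmetry \<Phi>" "\<And>a. \<Phi> [a] = [a]"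
  shows "\<Phi> [a, b] = [a, b] \<or> \<Phi> [a, b] = [b, a]"
proof -
  obtain x y where xy: "\<Phi> [a, b] = [x, y]"
    using symmetry_length[OF assms(1), of "[a, b]"]
    by (cases "\<Phi> [a, b]"; cases "tl (\<Phi> [a, b])") auto
  have "mset [x, y] = mset [a, b]"
    using letter_fixing_symmetry_mset[OF assms, of "[a, b]"] xy by simp
  then show ?thesis
    using xy by (auto simp: add_eq_conv_ex)
qed

lemma letter_fixing_symmetry_pair_orientation:
  assumes s: "symmetry \<Phi>" and L: "\<And>a. \<Phi> [a] = [a]" and "a \<noteq> b" "b \<noteq> c"
  shows "\<Phi> [a, b] = [a, b] \<longleftrightarrow> \<Phi> [b, c] = [b, c]"
proof (cases "a = c")
  case True
  have "\<Phi> [a, b] \<noteq> \<Phi> [b, a]"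
    using symmetry_inj[OF s] \<open>a \<noteq> b\<close> by (metis injD list.inject)
  then show ?thesis
    using letter_fixing_symmetry_pair[OF s L, of a b] letter_fixing_symmetry_pair[OF s L, of b a] True
    by metis
next
  case False
  obtain x y z where xyz: "\<Phi> [a, b, c] = [x, y, z]"
    using symmetry_length[OF s, of "[a, b, c]"] by (auto simp: length_Suc_conv numeral_3_eq_3)
  have "sublist [a, b] [a, b, c]" "sublist [b, c] [a, b, c]"
    by (auto simp: sublist_Cons_right)
  then have "sublist (\<Phi> [a, b]) [x, y, z]" "sublist (\<Phi> [b, c]) [x, y, z]"
    using symmetry_sublist[OF s] xyz by (metis list.distinct(1))+
  moreover have "\<not> (sublist [a, b] [x, y, z] \<and> sublist [c, b] [x, y, z])"
    using assms(3,4) False by (auto simp: sublist_Cons_right)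
  moreover have "\<not> (sublist [b, a] [x, y, z] \<and> sublist [b, c] [x, y, z])"
    using assms(3,4) False by (auto simp: sublist_Cons_right)
  ultimately show ?thesis
    using letter_fixing_symmetry_pair[OF s L, of a b] letter_fixing_symmetry_pair[OF s L, of b c]
    by metis
qed

lemma letter_fixing_symmetry_orientation:
  assumes s: "symmetry \<Phi>" and L: "\<And>a. \<Phi> [a] = [a]"
  shows "(\<forall>a b. \<Phi> [a, b] = [a, b]) \<or> (\<forall>a b. \<Phi> [a, b] = [b, a])"
proof (rule ccontr)
  assume "\<not> ?thesis"
  then obtain a b c d where ab: "\<Phi> [a, b] \<noteq> [a, b]" and cd: "\<Phi> [c, d] \<noteq> [d, c]"
    by auto
  then have "a \<noteq> b" "c \<noteq> d"
    using letter_fixing_symmetry_pair[OF s L, of a b] letter_fixing_symmetry_pair[OF s L, of c d]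
    by auto
  note orientation = letter_fixing_symmetry_pair_orientation[OF s L]
  have "\<Phi> [a, b] = [a, b] \<longleftrightarrow> \<Phi> [c, d] = [c, d]"
  proof -
    consider "c = b" | "c = a" | "c \<noteq> a" "c \<noteq> b"
      by blast
    then show ?thesis
      using orientation[of a b d] orientation[of a b a] orientation[of b a d] orientation[of a b c]
        orientation[of b c d] \<open>a \<noteq> b\<close> \<open>c \<noteq> d\<close> by cases auto
  qed
  then show False
    using ab cd letter_fixing_symmetry_pair[OF s L, of a b] letter_fixing_symmetry_pair[OF s L, of c d]
    by auto
qed

lemma letter_fixing_symmetry_eq_id:
  assumes s: "symmetry \<Phi>" and L: "\<And>a. \<Phi> [a] = [a]" and L2: "\<And>a b. \<Phi> [a, b] = [a, b]"
  shows "\<Phi> v = v"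
proof (induction v rule: length_induct)
  case (1 v)
  show ?case
  proof (cases "length v \<le> 2")
    case True
    then consider "v = []" | a where "v = [a]" | a b where "v = [a, b]"
      by (cases v; cases "tl v") auto
    then show ?thesis
      by cases (simp_all add: symmetry_Nil[OF s] L L2)
  next
    case False
    then obtain n where n: "length v = Suc n" "2 \<le> n"
      by (cases "length v") auto
    have shorter: "occ w (\<Phi> v) = occ w v" if "length w < length v" for w
      using "1" that symmetry_occ[OF s, of w v] by simp
    show ?thesis
    proof (rule eq_if_factor_occ_eq)
      show "length (\<Phi> v) = Suc n"
        using n symmetry_length[OF s, of v] by simp
    qed (use n shorter in auto)
  qed
qed

lemma letter_fixing_symmetry_cases:
  assumes s: "symmetry \<Phi>" and L: "\<And>a. \<Phi> [a] = [a]"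
  shows "\<Phi> = id \<or> \<Phi> = rev"
  using letter_fixing_symmetry_orientation[OF s L]
proof
  assume "\<forall>a b. \<Phi> [a, b] = [a, b]"
  then show ?thesis
    using letter_fixing_symmetry_eq_id[OF s L] by (simp add: fun_eq_iff)
next
  assume reversed: "\<forall>a b. \<Phi> [a, b] = [b, a]"
  have "(rev \<circ> \<Phi>) v = v" for v
    by (rule letter_fixing_symmetry_eq_id[OF symmetry_comp[OF symmetry_rev s]])
      (simp_all add: L reversed)
  then have "\<Phi> v = rev v" for v
    by (metis comp_apply rev_rev_ident)
  then show ?thesis
    by auto
qed

lemma symmetry_restricts_to_letter_perm:
  assumes s: "symmetry \<Psi>"
  shows "restricts_to_letter_perm \<Psi>"
proof -
  define \<sigma> where "\<sigma> a = hd (\<Psi> [a])" for a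
  have letter: "\<Psi> [a] = [\<sigma> a]" for a
    using symmetry_length[OF s, of "[a]"] unfolding \<sigma>_def by (cases "\<Psi> [a]") auto
  have "inj \<sigma>"
    using symmetry_inj[OF s] letter by (metis injD injI list.inject)
  moreover have "b \<in> range \<sigma>" for b
  proof -
    obtain u where u: "\<Psi> u = [b]"
      using s by (metis symmetry_def bij_is_surj surjD)
    then obtain a where "u = [a]"
      using symmetry_length[OF s, of u] by (cases u) auto
    then show ?thesis
      using u letter by (metis list.inject rangeI)
  qed
  ultimately show ?thesis
    unfolding restricts_to_letter_perm_def using letter by (metis bij_def surj_def rangeE)
qed

lemma symmetry_cases:
  assumes s: "symmetry \<Psi>" and "bij \<sigma>" and letter: "\<And>a. \<Psi> [a] = [\<sigma> a]"
  shows "\<Psi> = map \<sigma> \<or> \<Psi> = rev \<circ> map \<sigma>"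
proof -
  define \<Phi> where "\<Phi> = map (inv \<sigma>) \<circ> \<Psi>"
  have "symmetry \<Phi>"
    unfolding \<Phi>_def using assms by (intro symmetry_comp symmetry_map bij_imp_bij_inv)
  moreover have "\<Phi> [a] = [a]" for a
    unfolding \<Phi>_def using letter \<open>bij \<sigma>\<close> by (simp add: bij_is_inj)
  ultimately have "\<Phi> = id \<or> \<Phi> = rev"
    by (rule letter_fixing_symmetry_cases)
  moreover have "\<Psi> v = map \<sigma> (\<Phi> v)" for v
    unfolding \<Phi>_def using \<open>bij \<sigma>\<close> by (simp add: bij_is_surj surj_f_inv_f map_idI)
  ultimately show ?thesis
    by (auto simp: fun_eq_iff rev_map)
qed

lemma symmetry_iff_letter_map:
  "symmetry \<Psi> \<longleftrightarrow> (\<exists>\<sigma>. bij \<sigma> \<and> (\<Psi> = map \<sigma> \<or> \<Psi> = rev \<circ> map \<sigma>))"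
proof
  assume s: "symmetry \<Psi>"
  then obtain \<sigma> where "bij \<sigma>" "\<And>a. \<Psi> [a] = [\<sigma> a]"
    using symmetry_restricts_to_letter_perm unfolding restricts_to_letter_perm_def by blast
  then show "\<exists>\<sigma>. bij \<sigma> \<and> (\<Psi> = map \<sigma> \<or> \<Psi> = rev \<circ> map \<sigma>)"
    using symmetry_cases[OF s] by blast
next
  assume "\<exists>\<sigma>. bij \<sigma> \<and> (\<Psi> = map \<sigma> \<or> \<Psi> = rev \<circ> map \<sigma>)"
  then show "symmetry \<Psi>"
    using symmetry_map symmetry_comp[OF symmetry_rev symmetry_map] by blast
qed

lemma morphism_eq_map:
  assumes "morphism \<Psi>" "\<And>a. \<Psi> [a] = [\<sigma> a]"
  shows "\<Psi> = map \<sigma>"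
proof
  fix v
  have "\<Psi> [] = []"
    using assms(1) unfolding morphism_def by (metis append.right_neutral self_append_conv)
  then show "\<Psi> v = map \<sigma> v"
    using assms unfolding morphism_def by (induct v) (metis append_Cons append_Nil list.map)+
qed

lemma antimorphism_eq_rev_map:
  assumes "antimorphism \<Psi>" "\<And>a. \<Psi> [a] = [\<sigma> a]"
  shows "\<Psi> = rev \<circ> map \<sigma>"
proof -
  have "morphism (rev \<circ> \<Psi>)"
    using assms(1) unfolding morphism_def antimorphism_def by simp
  then have "rev \<circ> \<Psi> = map \<sigma>"
    using assms(2) by (intro morphism_eq_map) simp_all
  then have "\<Psi> v = rev (map \<sigma> v)" for v
    by (metis comp_apply rev_rev_ident)
  then show ?thesis
    by auto
qed

lemma morphism_or_antimorphism_iff_letter_map: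
  "(morphism \<Psi> \<or> antimorphism \<Psi>) \<and> restricts_to_letter_perm \<Psi> \<longleftrightarrow>
    (\<exists>\<sigma>. bij \<sigma> \<and> (\<Psi> = map \<sigma> \<or> \<Psi> = rev \<circ> map \<sigma>))"
proof
  assume "(morphism \<Psi> \<or> antimorphism \<Psi>) \<and> restricts_to_letter_perm \<Psi>"
  then show "\<exists>\<sigma>. bij \<sigma> \<and> (\<Psi> = map \<sigma> \<or> \<Psi> = rev \<circ> map \<sigma>)"
    unfolding restricts_to_letter_perm_def using morphism_eq_map antimorphism_eq_rev_map by blast
next
  assume "\<exists>\<sigma>. bij \<sigma> \<and> (\<Psi> = map \<sigma> \<or> \<Psi> = rev \<circ> map \<sigma>)"
  then show "(morphism \<Psi> \<or> antimorphism \<Psi>) \<and> restricts_to_letter_perm \<Psi>"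
    unfolding restricts_to_letter_perm_def morphism_def antimorphism_def by auto
qed

theorem theorem13:
  fixes \<Psi> :: "'a::finite list \<Rightarrow> 'a list"
  shows "symmetry \<Psi> \<longleftrightarrow>
           ((morphism \<Psi> \<or> antimorphism \<Psi>) \<and> restricts_to_letter_perm \<Psi>)"
  unfolding symmetry_iff_letter_map morphism_or_antimorphism_iff_letter_map ..

end
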